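(* Let $\mathcal{H}\in\mathbb{R}_D^{[n_1,\ldots,n_m]}$. Then $\mathcal{H}$ is $\mathbb{R}$-separable if and only if $\mathcal{H}$ is $\mathbb{C}$-separable.
   Context: For vectors $v_i$, $[v_1,\ldots,v_m]_{\otimes h}:=v_1\otimes\cdots\otimes v_m\otimes\overline{v_1}\otimes\cdots\otimes\overline{v_m}$. $\mathbb{R}_D^{[n_1,\ldots,n_m]}$ is the set of real tensors of the form $\sum_i\lambda_i[u_i^1,\ldots,u_i^m]_{\otimes h}$ with $\lambda_i\in\mathbb{R}$ and $u_i^j\in\mathbb{R}^{n_j}$. A Hermitian tensor $\mathcal{H}$ is $\mathbb{C}$-separable if $\mathcal{H}=\sum_{i=1}^r[u_i^1,\ldots,u_i^m]_{\otimes h}$ for some $u_i^j\in\mathbb{C}^{n_j}$, and $\mathbb{R}$-separable if this holds with all $u_i^j\in\mathbb{R}^{n_j}$. *)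

theory Defs
  imports Complex_Main
begin

text \<open>A tensor of order 2m with dimensions [n_1..n_m, n_1..n_m] is a function of two
index tuples i, j (each a map nat to nat); only valid index tuples (i k < n k for k < m)
are meaningful. Vector families are u :: nat => nat => 'a, with u k the k-th vector.\<close>

definition valid_idx :: "nat \<Rightarrow> (nat \<Rightarrow> nat) \<Rightarrow> (nat \<Rightarrow> nat) \<Rightarrow> bool" where
  "valid_idx m n i \<longleftrightarrow> (\<forall>k<m. i k < n k)"

text \<open>The entry (i,j) of [u_1,...,u_m]_{\<otimes>h} = u_1 \<otimes> ... \<otimes> u_m \<otimes> conj u_1 \<otimes> ... \<otimes> conj u_m.\<close>
definition herm_prod :: "nat \<Rightarrow> (nat \<Rightarrow> nat \<Rightarrow> complex) \<Rightarrow> (nat \<Rightarrow> nat) \<Rightarrow> (nat \<Rightarrow> nat) \<Rightarrow> complex" where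
  "herm_prod m u i j = (\<Prod>k<m. u k (i k) * cnj (u k (j k)))"

definition tensor_eq :: "nat \<Rightarrow> (nat \<Rightarrow> nat) \<Rightarrow> ((nat \<Rightarrow> nat) \<Rightarrow> (nat \<Rightarrow> nat) \<Rightarrow> complex)
    \<Rightarrow> ((nat \<Rightarrow> nat) \<Rightarrow> (nat \<Rightarrow> nat) \<Rightarrow> complex) \<Rightarrow> bool" where
  "tensor_eq m n A B \<longleftrightarrow> (\<forall>i j. valid_idx m n i \<longrightarrow> valid_idx m n j \<longrightarrow> A i j = B i j)"

definition in_RD :: "nat \<Rightarrow> (nat \<Rightarrow> nat) \<Rightarrow> ((nat \<Rightarrow> nat) \<Rightarrow> (nat \<Rightarrow> nat) \<Rightarrow> complex) \<Rightarrow> bool" where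
  "in_RD m n H \<longleftrightarrow> (\<exists>(r::nat) (lam::nat \<Rightarrow> real) (u::nat \<Rightarrow> nat \<Rightarrow> nat \<Rightarrow> real).
      tensor_eq m n H (\<lambda>i j. \<Sum>s<r. complex_of_real (lam s) *
          herm_prod m (\<lambda>k l. complex_of_real (u s k l)) i j))"

definition C_separable :: "nat \<Rightarrow> (nat \<Rightarrow> nat) \<Rightarrow> ((nat \<Rightarrow> nat) \<Rightarrow> (nat \<Rightarrow> nat) \<Rightarrow> complex) \<Rightarrow> bool" where
  "C_separable m n H \<longleftrightarrow> (\<exists>(r::nat) (u::nat \<Rightarrow> nat \<Rightarrow> nat \<Rightarrow> complex).
      tensor_eq m n H (\<lambda>i j. \<Sum>s<r. herm_prod m (u s) i j))"

definition R_separable :: "nat \<Rightarrow> (nat \<Rightarrow> nat) \<Rightarrow> ((nat \<Rightarrow> nat) \<Rightarrow> (nat \<Rightarrow> nat) \<Rightarrow> complex) \<Rightarrow> bool" where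
  "R_separable m n H \<longleftrightarrow> (\<exists>(r::nat) (u::nat \<Rightarrow> nat \<Rightarrow> nat \<Rightarrow> real).
      tensor_eq m n H (\<lambda>i j. \<Sum>s<r. herm_prod m (\<lambda>k l. complex_of_real (u s k l)) i j))"

end

theory Submission
  imports Defs
begin

text \<open>A tensor in R_D is invariant under every partial transposition, i.e. under
swapping i_k and j_k for all k in a set S, because each real summand is. Averaging a
C-separable decomposition over all 2^m partial transpositions therefore leaves H unchanged and
replaces every factor u_k(i_k) conj(u_k(j_k)) by its real part
Re u_k(i_k) Re u_k(j_k) + Im u_k(i_k) Im u_k(j_k). Expanding the product of these binomials
writes each summand as a sum of 2^m products of real vectors.\<close>

definition partial_transpose :: "nat set \<Rightarrow> (nat \<Rightarrow> nat) \<Rightarrow> (nat \<Rightarrow> nat) \<Rightarrow> nat \<Rightarrow> nat" where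
  "partial_transpose S i j = (\<lambda>k. if k \<in> S then j k else i k)"

definition partial_transpose_invariant ::
    "nat \<Rightarrow> (nat \<Rightarrow> nat) \<Rightarrow> ((nat \<Rightarrow> nat) \<Rightarrow> (nat \<Rightarrow> nat) \<Rightarrow> complex) \<Rightarrow> bool" where
  "partial_transpose_invariant m n H \<longleftrightarrow>
     (\<forall>S i j. valid_idx m n i \<longrightarrow> valid_idx m n j \<longrightarrow>
        H (partial_transpose S i j) (partial_transpose S j i) = H i j)"

definition real_herm_sums :: "nat \<Rightarrow> ((nat \<Rightarrow> nat) \<Rightarrow> (nat \<Rightarrow> nat) \<Rightarrow> complex) set" where
  "real_herm_sums m = {\<lambda>i j. \<Sum>s<r. herm_prod m (\<lambda>k l. complex_of_real (u s k l)) i j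
                       | (r::nat) (u::nat \<Rightarrow> nat \<Rightarrow> nat \<Rightarrow> real). True}"

lemma R_separable_iff_real_herm_sums:
  "R_separable m n H \<longleftrightarrow> (\<exists>F\<in>real_herm_sums m. tensor_eq m n H F)"
  unfolding R_separable_def real_herm_sums_def by blast

lemma R_separable_imp_C_separable:
  assumes "R_separable m n H"
  shows "C_separable m n H"
proof -
  obtain r :: nat and u where
    "tensor_eq m n H (\<lambda>i j. \<Sum>s<r. herm_prod m (\<lambda>k l. complex_of_real (u s k l)) i j)"
    using assms unfolding R_separable_def by blast
  then show ?thesis
    unfolding C_separable_def by (intro exI[of _ r] exI[of _ "\<lambda>s k l. complex_of_real (u s k l)"])
qed

lemma zero_in_real_herm_sums: "(\<lambda>i j. 0) \<in> real_herm_sums m"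
  unfolding real_herm_sums_def by (rule CollectI, rule exI[of _ 0]) auto

lemma herm_prod_in_real_herm_sums:
  "herm_prod m (\<lambda>k l. complex_of_real (v k l)) \<in> real_herm_sums m"
  unfolding real_herm_sums_def by (rule CollectI, rule exI[of _ 1], rule exI[of _ "\<lambda>_. v"]) auto

lemma add_in_real_herm_sums:
  assumes "F \<in> real_herm_sums m" "G \<in> real_herm_sums m"
  shows "(\<lambda>i j. F i j + G i j) \<in> real_herm_sums m"
proof -
  obtain r1 :: nat and u1 where F: "F = (\<lambda>i j. \<Sum>s<r1. herm_prod m (\<lambda>k l. complex_of_real (u1 s k l)) i j)"
    using assms(1) unfolding real_herm_sums_def by blast
  obtain r2 :: nat and u2 where G: "G = (\<lambda>i j. \<Sum>s<r2. herm_prod m (\<lambda>k l. complex_of_real (u2 s k l)) i j)"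
    using assms(2) unfolding real_herm_sums_def by blast
  define u where "u = (\<lambda>s. if s < r1 then u1 s else u2 (s - r1))"
  have "F i j + G i j = (\<Sum>s<r1 + r2. herm_prod m (\<lambda>k l. complex_of_real (u s k l)) i j)" for i j
    unfolding F G u_def by (induct r2) (simp_all add: add.assoc)
  then show ?thesis
    unfolding real_herm_sums_def by blast
qed

lemma sum_in_real_herm_sums:
  assumes "\<And>x. x \<in> X \<Longrightarrow> F x \<in> real_herm_sums m"
  shows "(\<lambda>i j. \<Sum>x\<in>X. F x i j) \<in> real_herm_sums m"
  using assms
proof (induction X rule: infinite_finite_induct)
  case (insert a X)
  then show ?case
    using add_in_real_herm_sums[of "F a" m "\<lambda>i j. \<Sum>x\<in>X. F x i j"] by simp
qed (simp_all add: zero_in_real_herm_sums)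

lemma valid_idx_partial_transpose:
  "valid_idx m n i \<Longrightarrow> valid_idx m n j \<Longrightarrow> valid_idx m n (partial_transpose S i j)"
  unfolding valid_idx_def partial_transpose_def by auto

lemma herm_prod_partial_transpose:
  "herm_prod m u (partial_transpose S i j) (partial_transpose S j i)
     = (\<Prod>k<m. if k \<in> S then cnj (u k (i k) * cnj (u k (j k))) else u k (i k) * cnj (u k (j k)))"
  unfolding herm_prod_def partial_transpose_def by (intro prod.cong) (auto simp: mult.commute)

lemma herm_prod_real_partial_transpose:
  "herm_prod m (\<lambda>k l. complex_of_real (u k l)) (partial_transpose S i j) (partial_transpose S j i)
     = herm_prod m (\<lambda>k l. complex_of_real (u k l)) i j"
  unfolding herm_prod_partial_transpose unfolding herm_prod_def
  by (intro prod.cong) (auto simp: mult.commute)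

lemma in_RD_imp_partial_transpose_invariant:
  assumes "in_RD m n H"
  shows "partial_transpose_invariant m n H"
proof -
  obtain r :: nat and lam u where H: "tensor_eq m n H (\<lambda>i j. \<Sum>s<r. complex_of_real (lam s) *
      herm_prod m (\<lambda>k l. complex_of_real (u s k l)) i j)"
    using assms unfolding in_RD_def by blast
  show ?thesis
    unfolding partial_transpose_invariant_def
    using H valid_idx_partial_transpose
    by (auto simp: tensor_eq_def herm_prod_real_partial_transpose)
qed

lemma sum_herm_prod_partial_transpose:
  "(\<Sum>S\<in>Pow {..<m}. herm_prod m u (partial_transpose S i j) (partial_transpose S j i))
     = 2 ^ m * (\<Prod>k<m. complex_of_real (Re (u k (i k) * cnj (u k (j k)))))"
proof -
  let ?z = "\<lambda>k. u k (i k) * cnj (u k (j k))"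
  have "(\<Sum>S\<in>Pow {..<m}. herm_prod m u (partial_transpose S i j) (partial_transpose S j i))
      = (\<Sum>S\<in>Pow {..<m}. (\<Prod>k\<in>S. cnj (?z k)) * (\<Prod>k\<in>{..<m} - S. ?z k))"
    unfolding herm_prod_partial_transpose
    by (intro sum.cong refl, subst prod.If_cases) (auto intro!: arg_cong2[where f = "(*)"] prod.cong)
  also have "\<dots> = (\<Prod>k<m. cnj (?z k) + ?z k)"
    by (rule prod_add[symmetric]) simp
  also have "\<dots> = (\<Prod>k<m. 2 * complex_of_real (Re (?z k)))"
    by (simp only: add.commute[of "cnj _"] complex_add_cnj of_real_mult of_real_numeral)
  finally show ?thesis
    by (simp only: prod.distrib prod_constant card_lessThan)
qed

text \<open>Expanding Re (a * cnj b) = Re a * Re b + Im a * Im b in every factor: the set T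
selects the factors contributing real parts.\<close>

definition re_im_part :: "nat set \<Rightarrow> (nat \<Rightarrow> nat \<Rightarrow> complex) \<Rightarrow> nat \<Rightarrow> nat \<Rightarrow> real" where
  "re_im_part T u k l = (if k \<in> T then Re (u k l) else Im (u k l))"

lemma prod_Re_eq_sum_herm_prod_re_im_part:
  "(\<Prod>k<m. complex_of_real (Re (u k (i k) * cnj (u k (j k)))))
     = (\<Sum>T\<in>Pow {..<m}. herm_prod m (\<lambda>k l. complex_of_real (re_im_part T u k l)) i j)"
proof -
  let ?re = "\<lambda>k. complex_of_real (Re (u k (i k)) * Re (u k (j k)))"
  let ?im = "\<lambda>k. complex_of_real (Im (u k (i k)) * Im (u k (j k)))"
  have "(\<Prod>k<m. complex_of_real (Re (u k (i k) * cnj (u k (j k))))) = (\<Prod>k<m. ?re k + ?im k)"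
    by simp
  also have "\<dots> = (\<Sum>T\<in>Pow {..<m}. prod ?re T * prod ?im ({..<m} - T))"
    by (rule prod_add) simp
  also have "\<dots> = (\<Sum>T\<in>Pow {..<m}. herm_prod m (\<lambda>k l. complex_of_real (re_im_part T u k l)) i j)"
  proof (rule sum.cong[OF refl])
    fix T assume "T \<in> Pow {..<m}"
    then have "{..<m} \<inter> T = T" "{..<m} \<inter> - T = {..<m} - T"
      by auto
    moreover have "herm_prod m (\<lambda>k l. complex_of_real (re_im_part T u k l)) i j
        = (\<Prod>k<m. if k \<in> T then ?re k else ?im k)"
      unfolding herm_prod_def re_im_part_def by (intro prod.cong) auto
    ultimately show "prod ?re T * prod ?im ({..<m} - T)
        = herm_prod m (\<lambda>k l. complex_of_real (re_im_part T u k l)) i j"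
      by (simp add: prod.If_cases)
  qed
  finally show ?thesis .
qed

lemma partial_transpose_invariant_real_part:
  assumes inv: "partial_transpose_invariant m n H"
    and H: "tensor_eq m n H (\<lambda>i j. \<Sum>s<r. herm_prod m (u s) i j)"
  shows "tensor_eq m n H (\<lambda>i j. \<Sum>s<r. \<Prod>k<m. complex_of_real (Re (u s k (i k) * cnj (u s k (j k)))))"
  unfolding tensor_eq_def
proof (intro allI impI)
  fix i j assume ij: "valid_idx m n i" "valid_idx m n j"
  have "2 ^ m * H i j = (\<Sum>S\<in>Pow {..<m}. H (partial_transpose S i j) (partial_transpose S j i))"
    using inv ij by (simp add: partial_transpose_invariant_def card_Pow)
  also have "\<dots> = (\<Sum>S\<in>Pow {..<m}. \<Sum>s<r.
      herm_prod m (u s) (partial_transpose S i j) (partial_transpose S j i))"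
    using H ij by (simp add: tensor_eq_def valid_idx_partial_transpose)
  also have "\<dots> = 2 ^ m * (\<Sum>s<r. \<Prod>k<m. complex_of_real (Re (u s k (i k) * cnj (u s k (j k)))))"
    by (subst sum.swap) (simp add: sum_herm_prod_partial_transpose sum_distrib_left)
  finally show "H i j = (\<Sum>s<r. \<Prod>k<m. complex_of_real (Re (u s k (i k) * cnj (u s k (j k)))))"
    by simp
qed

theorem lemma6p2:
  fixes m :: nat and n :: "nat \<Rightarrow> nat"
    and H :: "(nat \<Rightarrow> nat) \<Rightarrow> (nat \<Rightarrow> nat) \<Rightarrow> complex"
  assumes "in_RD m n H"
  shows "R_separable m n H \<longleftrightarrow> C_separable m n H"
proof
  show "R_separable m n H \<Longrightarrow> C_separable m n H"
    by (rule R_separable_imp_C_separable)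
next
  assume "C_separable m n H"
  then obtain r :: nat and u where "tensor_eq m n H (\<lambda>i j. \<Sum>s<r. herm_prod m (u s) i j)"
    unfolding C_separable_def by blast
  with in_RD_imp_partial_transpose_invariant[OF assms]
  have "tensor_eq m n H (\<lambda>i j. \<Sum>s<r. \<Sum>T\<in>Pow {..<m}.
      herm_prod m (\<lambda>k l. complex_of_real (re_im_part T (u s) k l)) i j)"
    unfolding prod_Re_eq_sum_herm_prod_re_im_part[symmetric]
    by (rule partial_transpose_invariant_real_part)
  moreover have "(\<lambda>i j. \<Sum>s<r. \<Sum>T\<in>Pow {..<m}.
      herm_prod m (\<lambda>k l. complex_of_real (re_im_part T (u s) k l)) i j) \<in> real_herm_sums m"
    by (intro sum_in_real_herm_sums herm_prod_in_real_herm_sums)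
  ultimately show "R_separable m n H"
    unfolding R_separable_iff_real_herm_sums by blast
qed

end
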